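(* Let $A$ be a finite nonempty set of positive real numbers. Then $$\left|\frac{A+A}{A+A}\right|\geq 2|A|^2-1.$$
   Context: For a finite set $A\subset\mathbb{R}$ of positive reals, $\frac{A+A}{A+A}:=\left\{\frac{a+b}{c+d}: a,b,c,d\in A\right\}$. $|X|$ denotes the cardinality of a finite set $X$. *)

theory Defs
  imports Complex_Main
begin

definition sum_ratio_set :: "real set \<Rightarrow> real set" where
  "sum_ratio_set A = {(a + b) / (c + d) | a b c d. a \<in> A \<and> b \<in> A \<and> c \<in> A \<and> d \<in> A}"

end

theory Submission
  imports Defs "HOL-Library.Product_Plus"
begin

(*
  Encode a quotient (a + b) / (c + d) as the slope of the vector sum of the points
  (c, a) and (d, b) of the right half-plane.  Then (A+A)/(A+A) is the set of slopes of sums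
  p + q with p, q in the grid P = A \<times> A.

  For an arbitrary finite nonempty set P of points with positive abscissa we show
    2 |P| + 1 \<le> |slopes of P + P| + |points of P on the lowest line| + |points on the highest line|
  by induction on the number of lines through the origin that meet P: removing the highest
  line L leaves P', and P + P contains, besides the slopes of P' + P', all slopes strictly
  between the two highest lines (at least |L'| + |L| - 1 of them, realised by sums of a point
  of the second-highest line L' with a point of L) plus the slope of L itself.

  For the grid A \<times> A the lowest and the highest line each contain a single point, namely
  (max A, min A) and (min A, max A), which gives 2 |A|^2 - 1.
*)

(* The slope of the line through the origin and p; meaningful for 0 < fst p. *)
definition slope :: "real \<times> real \<Rightarrow> real" where
  "slope p = snd p / fst p"

definition sum_slopes :: "(real \<times> real) set \<Rightarrow> (real \<times> real) set \<Rightarrow> real set" where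
  "sum_slopes P Q = {slope (p + q) | p q. p \<in> P \<and> q \<in> Q}"

definition min_line :: "(real \<times> real) set \<Rightarrow> (real \<times> real) set" where
  "min_line P = {p \<in> P. slope p = Min (slope ` P)}"

definition max_line :: "(real \<times> real) set \<Rightarrow> (real \<times> real) set" where
  "max_line P = {p \<in> P. slope p = Max (slope ` P)}"

lemma finite_sum_slopes:
  assumes "finite P" "finite Q"
  shows "finite (sum_slopes P Q)"
proof -
  have "sum_slopes P Q = (\<lambda>(p, q). slope (p + q)) ` (P \<times> Q)"
    unfolding sum_slopes_def by (auto simp del: add_Pair)
  then show ?thesis using assms by simp
qed

lemma sum_slopes_mono: "P \<subseteq> P' \<Longrightarrow> Q \<subseteq> Q' \<Longrightarrow> sum_slopes P Q \<subseteq> sum_slopes P' Q'"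
  unfolding sum_slopes_def by blast

lemma snd_eq_slope_mult: "0 < fst p \<Longrightarrow> snd p = slope p * fst p"
  by (simp add: slope_def)

lemma slope_add:
  assumes "0 < fst p" "0 < fst q"
  shows "slope (p + q) = (slope p * fst p + slope q * fst q) / (fst p + fst q)"
  using assms by (simp add: slope_def)

lemma weighted_mean_less_iff:
  fixes a b x y x' y' :: real
  assumes "a < b" "0 < x" "0 < y" "0 < x'" "0 < y'"
  shows "(a * x + b * y) / (x + y) < (a * x' + b * y') / (x' + y') \<longleftrightarrow> y * x' < y' * x"
proof -
  have "(a * x + b * y) / (x + y) < (a * x' + b * y') / (x' + y')
      \<longleftrightarrow> (a * x + b * y) * (x' + y') < (a * x' + b * y') * (x + y)"
    using assms by (simp add: field_simps)
  also have "\<dots> \<longleftrightarrow> (b - a) * (y * x') < (b - a) * (y' * x)"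
    by (simp add: algebra_simps)
  also have "\<dots> \<longleftrightarrow> y * x' < y' * x"
    using assms by simp
  finally show ?thesis .
qed

lemma slope_add_le:
  assumes "0 < fst p" "0 < fst q" "slope p \<le> m" "slope q \<le> m"
  shows "slope (p + q) \<le> m"
proof -
  have "snd p \<le> m * fst p" "snd q \<le> m * fst q"
    using assms by (simp_all add: slope_def divide_le_eq)
  then have "snd p + snd q \<le> m * (fst p + fst q)"
    by (simp add: algebra_simps)
  then show ?thesis
    using assms by (simp add: slope_def divide_le_eq)
qed

lemma slope_add_between:
  assumes "0 < fst p" "0 < fst q" "slope p < slope q"
  shows "slope p < slope (p + q)" "slope (p + q) < slope q"
proof -
  have "slope p * (fst p + fst q) < slope p * fst p + slope q * fst q"
    "slope p * fst p + slope q * fst q < slope q * (fst p + fst q)"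
    using assms by (simp_all add: algebra_simps)
  then show "slope p < slope (p + q)" "slope (p + q) < slope q"
    using assms by (simp_all add: slope_add less_divide_eq divide_less_eq)
qed

lemma slope_add_same:
  assumes "0 < fst p" "0 < fst q" "slope p = m" "slope q = m"
  shows "slope (p + q) = m"
  using assms by (simp add: slope_add field_simps)

lemma point_on_line_eq:
  assumes "0 < fst p" "slope p = slope p'" "fst p = fst p'"
  shows "p = p'"
  using assms snd_eq_slope_mult[of p] snd_eq_slope_mult[of p'] by (simp add: prod_eq_iff)

lemma slope_add_less_iff:
  assumes "a < b" "slope p = a" "slope p' = a" "slope q = b" "slope q' = b"
    and "0 < fst p" "0 < fst p'" "0 < fst q" "0 < fst q'"
  shows "slope (p + q) < slope (p' + q') \<longleftrightarrow> fst q * fst p' < fst q' * fst p"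
  using assms slope_add[of p q] slope_add[of p' q']
    weighted_mean_less_iff[of a b "fst p" "fst q" "fst p'" "fst q'"] by simp

lemma inj_on_slope_add_right:
  assumes "a < b" "0 < fst p" "slope p = a"
    and line: "\<And>q. q \<in> L \<Longrightarrow> 0 < fst q \<and> slope q = b"
  shows "inj_on (\<lambda>q. slope (p + q)) L"
proof (rule inj_onI)
  fix q q' assume q: "q \<in> L" "q' \<in> L" and eq: "slope (p + q) = slope (p + q')"
  have "\<not> fst q * fst p < fst q' * fst p" "\<not> fst q' * fst p < fst q * fst p"
    using slope_add_less_iff[of a b p p q q'] slope_add_less_iff[of a b p p q' q] assms q eq
    by auto
  then have "fst q = fst q'"
    using assms(2) by simp
  then show "q = q'"
    using line q point_on_line_eq[of q q'] by simp
qed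

lemma inj_on_slope_add_left:
  assumes "a < b" "0 < fst q" "slope q = b"
    and line: "\<And>p. p \<in> L \<Longrightarrow> 0 < fst p \<and> slope p = a"
  shows "inj_on (\<lambda>p. slope (p + q)) L"
proof (rule inj_onI)
  fix p p' assume p: "p \<in> L" "p' \<in> L" and eq: "slope (p + q) = slope (p' + q)"
  have "\<not> fst q * fst p' < fst q * fst p" "\<not> fst q * fst p < fst q * fst p'"
    using slope_add_less_iff[of a b p p' q q] slope_add_less_iff[of a b p' p q q] assms p eq
    by auto
  then have "fst p = fst p'"
    using assms(2) by simp
  then show "p = p'"
    using line p point_on_line_eq[of p p'] by simp
qed

(* If all points of L1 lie on a line of slope a and those of L2 on a line of
   larger slope b, the sums L1 + L2 have at least |L1| + |L2| - 1 distinct slopes: with p0, q0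
   the points of least abscissa, the slopes of p0 + q (q in L2) are pairwise distinct and at
   least slope (p0 + q0), those of p + q0 (p in L1) pairwise distinct and at most it. *)
lemma card_sum_slopes_two_lines:
  assumes "finite L1" "finite L2" "L1 \<noteq> {}" "L2 \<noteq> {}" "a < b"
    and line1: "\<And>p. p \<in> L1 \<Longrightarrow> 0 < fst p \<and> slope p = a"
    and line2: "\<And>q. q \<in> L2 \<Longrightarrow> 0 < fst q \<and> slope q = b"
  shows "card L1 + card L2 \<le> card (sum_slopes L1 L2) + 1"
proof -
  obtain p0 where p0: "p0 \<in> L1" "\<And>p. p \<in> L1 \<Longrightarrow> fst p0 \<le> fst p"
    using arg_min_if_finite(1)[OF assms(1,3), of fst] arg_min_least[OF assms(1,3), of _ fst] by blast
  obtain q0 where q0: "q0 \<in> L2" "\<And>q. q \<in> L2 \<Longrightarrow> fst q0 \<le> fst q"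
    using arg_min_if_finite(1)[OF assms(2,4), of fst] arg_min_least[OF assms(2,4), of _ fst] by blast
  define U where "U = (\<lambda>q. slope (p0 + q)) ` L2"
  define V where "V = (\<lambda>p. slope (p + q0)) ` L1"
  have card_U: "card U = card L2"
    unfolding U_def using inj_on_slope_add_right[OF \<open>a < b\<close> _ _ line2] line1 p0(1)
    by (simp add: card_image)
  have card_V: "card V = card L1"
    unfolding V_def using inj_on_slope_add_left[OF \<open>a < b\<close> _ _ line1] line2 q0(1)
    by (simp add: card_image)
  have "U \<inter> V \<subseteq> {slope (p0 + q0)}"
  proof
    fix v assume "v \<in> U \<inter> V"
    then obtain p q where pq: "p \<in> L1" "q \<in> L2" "v = slope (p0 + q)" "v = slope (p + q0)"
      unfolding U_def V_def by auto
    have "\<not> v < slope (p0 + q0)"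
      using slope_add_less_iff[OF \<open>a < b\<close>, of p0 p0 q q0] pq line1 line2 p0 q0
      by (simp add: mult_right_mono not_less)
    moreover have "\<not> slope (p0 + q0) < v"
      using slope_add_less_iff[OF \<open>a < b\<close>, of p0 p q0 q0] pq line1 line2 p0 q0
      by (simp add: mult_left_mono not_less)
    ultimately show "v \<in> {slope (p0 + q0)}" by simp
  qed
  then have "card (U \<inter> V) \<le> 1"
    using card_mono[of "{slope (p0 + q0)}"] by simp
  moreover have "card U + card V = card (U \<union> V) + card (U \<inter> V)"
    using card_Un_Int assms(1,2) U_def V_def by blast
  moreover have "U \<union> V \<subseteq> sum_slopes L1 L2"
    unfolding U_def V_def sum_slopes_def using p0(1) q0(1) by blast
  then have "card (U \<union> V) \<le> card (sum_slopes L1 L2)"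
    by (rule card_mono[OF finite_sum_slopes[OF assms(1,2)]])
  ultimately show ?thesis
    using card_U card_V by linarith
qed

lemma remove_Max:
  fixes S :: "'a::linorder set"
  assumes "finite S" "S \<noteq> {}" "Min S < Max S"
  shows "S - {Max S} \<noteq> {}" "Max (S - {Max S}) < Max S" "Min (S - {Max S}) = Min S"
proof -
  have min_in: "Min S \<in> S - {Max S}"
    using assms by simp
  then show ne: "S - {Max S} \<noteq> {}"
    by blast
  have "Max (S - {Max S}) \<in> S - {Max S}"
    using assms(1) ne by (intro Max_in) auto
  then show "Max (S - {Max S}) < Max S"
    using assms(1) by (simp add: order.not_eq_order_implies_strict)
  show "Min (S - {Max S}) = Min S"
    using assms(1) min_in by (intro Min_eqI) auto
qed

(* Then the slopes of Q + Q (all \<le> m), those of L' + L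
   (all strictly between m and M) and M itself (the slope of q + q for q in L) are disjoint
   parts of the slopes of P + P. *)
lemma card_sum_slopes_add_top_line:
  assumes "finite P" "\<forall>p\<in>P. 0 < fst p"
    and "Q \<subseteq> P" "L' \<subseteq> P" "L \<subseteq> P" "L \<noteq> {}"
    and "\<forall>p\<in>Q. slope p \<le> m" "\<forall>p\<in>L'. slope p = m" "\<forall>q\<in>L. slope q = M" "m < M"
  shows "card (sum_slopes Q Q) + card (sum_slopes L' L) + 1 \<le> card (sum_slopes P P)"
proof -
  have pos: "0 < fst p" if "p \<in> Q \<union> L' \<union> L" for p
    using assms(2-5) that by blast
  have low: "x \<le> m" if "x \<in> sum_slopes Q Q" for x
    using that assms(7) pos slope_add_le unfolding sum_slopes_def by blast
  have mid: "m < x \<and> x < M" if x: "x \<in> sum_slopes L' L" for x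
  proof -
    obtain p q where "p \<in> L'" "q \<in> L" "x = slope (p + q)"
      using x unfolding sum_slopes_def by blast
    then show ?thesis
      using slope_add_between[of p q] pos assms(8-10) by auto
  qed
  have top: "M \<in> sum_slopes P P"
  proof -
    obtain q where "q \<in> L" using assms(6) by blast
    then have "slope (q + q) = M"
      using slope_add_same pos assms(9) by blast
    then show ?thesis
      using \<open>q \<in> L\<close> assms(5) unfolding sum_slopes_def by blast
  qed
  have fin: "finite (sum_slopes Q Q)" "finite (sum_slopes L' L)"
    using assms(1,3-5) finite_subset finite_sum_slopes by metis+
  have "card (sum_slopes Q Q \<union> sum_slopes L' L \<union> {M})
      = card (sum_slopes Q Q) + card (sum_slopes L' L) + 1"
  proof -
    have "sum_slopes Q Q \<inter> sum_slopes L' L = {}" "M \<notin> sum_slopes Q Q \<union> sum_slopes L' L"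
      using low mid assms(10) by fastforce+
    then show ?thesis
      using fin by (simp add: card_Un_disjoint)
  qed
  moreover have "sum_slopes Q Q \<union> sum_slopes L' L \<union> {M} \<subseteq> sum_slopes P P"
    using sum_slopes_mono assms(3-5) top by blast
  ultimately show ?thesis
    using card_mono[OF finite_sum_slopes[OF assms(1,1)]] by metis
qed

lemma slope_image_remove_max_line:
  "slope ` (P - max_line P) = slope ` P - {Max (slope ` P)}"
  unfolding max_line_def by auto

lemma max_line_nonempty: "finite P \<Longrightarrow> P \<noteq> {} \<Longrightarrow> max_line P \<noteq> {}"
  unfolding max_line_def using Max_in[of "slope ` P"] by fastforce

(* The main estimate, by induction on the number of slopes of P.  If P lies on one line,
   both extremal lines are all of P.  Otherwise remove the highest line L = max_line P, apply
   the induction hypothesis to P' = P - L, whose lowest line is that of P, and count the new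
   slopes with the two previous lemmas applied to L' = max_line P' and L. *)
lemma card_sum_slopes_lower_bound:
  assumes "finite P" "P \<noteq> {}" "\<forall>p\<in>P. 0 < fst p"
  shows "2 * card P + 1 \<le> card (sum_slopes P P) + card (min_line P) + card (max_line P)"
  using assms
proof (induction "card (slope ` P)" arbitrary: P rule: less_induct)
  case less
  let ?S = "slope ` P"
  have S: "finite ?S" "?S \<noteq> {}"
    using less.prems by auto
  consider "Min ?S = Max ?S" | "Min ?S < Max ?S"
    using Min_in[OF S] Max_ge[OF S(1)] by (metis order_le_less)
  then show ?case
  proof cases
    case 1
    then have "min_line P = P" "max_line P = P"
      unfolding min_line_def max_line_def using S Min_le Max_ge by (fastforce intro: antisym)+
    moreover have "sum_slopes P P \<noteq> {}"
      using less.prems(2) unfolding sum_slopes_def by blast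
    then have "1 \<le> card (sum_slopes P P)"
      using finite_sum_slopes[OF less.prems(1,1)] by (simp add: Suc_le_eq card_gt_0_iff)
    ultimately show ?thesis by simp
  next
    case 2
    define L where "L = max_line P"
    define P' where "P' = P - L"
    define L' where "L' = max_line P'"
    have slopes': "slope ` P' = ?S - {Max ?S}"
      unfolding P'_def L_def by (rule slope_image_remove_max_line)
    have "P' \<noteq> {}" and max_less: "Max (slope ` P') < Max ?S"
      and min_eq: "Min (slope ` P') = Min ?S"
      using remove_Max[OF S 2] slopes' by auto
    have "finite P'" "\<forall>p\<in>P'. 0 < fst p"
      using less.prems unfolding P'_def by auto
    moreover have "card (slope ` P') < card ?S"
      using slopes' S card_Diff1_less Max_in by metis
    ultimately have IH: "2 * card P' + 1
        \<le> card (sum_slopes P' P') + card (min_line P') + card L'"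
      using less.hyps \<open>P' \<noteq> {}\<close> unfolding L'_def by blast
    have "min_line P' = min_line P"
      using min_eq 2 unfolding min_line_def P'_def L_def max_line_def by auto
    then have "card (min_line P') = card (min_line P)"
      by simp
    moreover have "card P = card P' + card L"
    proof -
      have "L \<subseteq> P"
        unfolding L_def max_line_def by blast
      then show ?thesis
        using less.prems(1) card_Diff_subset[of L P] card_mono[of P L] finite_subset
        unfolding P'_def by fastforce
    qed
    moreover have "card L' + card L \<le> card (sum_slopes L' L) + 1"
    proof (rule card_sum_slopes_two_lines[OF _ _ _ _ max_less])
      show "finite L'" "finite L" "L' \<noteq> {}" "L \<noteq> {}"
        using less.prems \<open>finite P'\<close> \<open>P' \<noteq> {}\<close> max_line_nonempty
        unfolding L'_def L_def max_line_def by auto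
    qed (use less.prems in \<open>auto simp: L_def L'_def P'_def max_line_def\<close>)
    moreover have "card (sum_slopes P' P') + card (sum_slopes L' L) + 1 \<le> card (sum_slopes P P)"
    proof (rule card_sum_slopes_add_top_line[OF less.prems(1,3) _ _ _ _ _ _ _ max_less])
      show "P' \<subseteq> P" "L' \<subseteq> P" "L \<subseteq> P" "L \<noteq> {}"
        using less.prems max_line_nonempty unfolding P'_def L'_def L_def max_line_def by auto
      show "\<forall>p\<in>P'. slope p \<le> Max (slope ` P')"
        using \<open>finite P'\<close> by simp
    qed (auto simp: L_def L'_def max_line_def)
    ultimately show ?thesis
      using IH unfolding L_def by linarith
  qed
qed

lemma sum_slopes_square: "sum_slopes (A \<times> A) (A \<times> A) = sum_ratio_set A"
proof -
  have "slope ((c, a) + (d, b)) = (a + b) / (c + d)" for a b c d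
    by (simp add: slope_def)
  then show ?thesis
    unfolding sum_slopes_def sum_ratio_set_def by force
qed

lemma ratio_ge_extreme_ratio:
  fixes a c m M :: real
  assumes "0 < m" "m \<le> a" "0 < c" "c \<le> M" "a / c \<le> m / M"
  shows "a = m \<and> c = M"
proof -
  have "a * M \<le> m * c"
    using assms by (simp add: field_simps)
  moreover have "m * M \<le> a * M" "m * c \<le> m * M"
    using assms by simp_all
  ultimately have "a * M = m * M" "m * c = m * M"
    by linarith+
  then show ?thesis
    using assms by simp
qed

lemma card_min_line_square:
  assumes "finite A" "A \<noteq> {}" "\<forall>x\<in>A. 0 < x"
  shows "card (min_line (A \<times> A)) \<le> 1"
proof -
  have "min_line (A \<times> A) \<subseteq> {(Max A, Min A)}"
  proof
    fix p assume p: "p \<in> min_line (A \<times> A)"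
    obtain c a where ca: "p = (c, a)" "c \<in> A" "a \<in> A"
      using p unfolding min_line_def by auto
    have "slope p \<le> slope (Max A, Min A)"
      using p assms unfolding min_line_def by (simp add: Min_le)
    then have "a / c \<le> Min A / Max A"
      by (simp add: ca slope_def)
    then have "a = Min A \<and> c = Max A"
      using ratio_ge_extreme_ratio[of "Min A" a c "Max A"] ca assms by simp
    then show "p \<in> {(Max A, Min A)}"
      using ca by simp
  qed
  then show ?thesis
    using card_mono[of "{(Max A, Min A)}"] by simp
qed

lemma card_max_line_square:
  assumes "finite A" "A \<noteq> {}" "\<forall>x\<in>A. 0 < x"
  shows "card (max_line (A \<times> A)) \<le> 1"
proof -
  have "max_line (A \<times> A) \<subseteq> {(Min A, Max A)}"
  proof
    fix p assume p: "p \<in> max_line (A \<times> A)"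
    obtain c a where ca: "p = (c, a)" "c \<in> A" "a \<in> A"
      using p unfolding max_line_def by auto
    have "slope (Min A, Max A) \<le> slope p"
      using p assms unfolding max_line_def by (simp add: Max_ge)
    then have "Max A / Min A \<le> a / c"
      by (simp add: ca slope_def)
    moreover have "0 < a" "0 < c" "0 < Min A" "0 < Max A"
      using ca assms by simp_all
    ultimately have "c / a \<le> Min A / Max A"
      by (simp add: field_simps mult.commute)
    then have "c = Min A \<and> a = Max A"
      using ratio_ge_extreme_ratio[of "Min A" c a "Max A"] ca assms by simp
    then show "p \<in> {(Min A, Max A)}"
      using ca by simp
  qed
  then show ?thesis
    using card_mono[of "{(Min A, Max A)}"] by simp
qed

theorem theorem1:
  fixes A :: "real set"
  assumes "finite A" and "A \<noteq> {}" and "\<forall>x\<in>A. x > 0"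
  shows "real (card (sum_ratio_set A)) \<ge> 2 * real (card A) ^ 2 - 1"
proof -
  have "2 * card (A \<times> A) + 1
      \<le> card (sum_ratio_set A) + card (min_line (A \<times> A)) + card (max_line (A \<times> A))"
    using card_sum_slopes_lower_bound[of "A \<times> A"] sum_slopes_square assms by auto
  then have "2 * (card A * card A) \<le> card (sum_ratio_set A) + 1"
    using card_min_line_square[OF assms] card_max_line_square[OF assms]
    by (simp add: card_cartesian_product)
  then have "real (2 * (card A * card A)) \<le> real (card (sum_ratio_set A) + 1)"
    by (simp only: of_nat_le_iff)
  then show ?thesis
    by (simp add: power2_eq_square)
qed

end
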